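(* Let $n\ge1$, $m\in\mathbb{N}$, $\mathcal{Q}_m=\bigoplus_{t=0}^mH_t\subseteq H^2(\mathbb{T}^n)$ and $p\in\mathcal{Q}_m$. There exists $f\in\mathcal{Q}_m^\perp$ (orthogonal complement in $H^2(\mathbb{T}^n)$) such that $p+f\in\mathcal{S}(\mathbb{D}^n)$ if and only if $S_p=P_{\mathcal{Q}_m}T_p|_{\mathcal{Q}_m}$ is a contraction and admits a lift, i.e. there is $\varphi\in\mathcal{S}(\mathbb{D}^n)$ with $S_p=P_{\mathcal{Q}_m}T_\varphi|_{\mathcal{Q}_m}$.
   Context: $H_t$ is the space of homogeneous polynomials of degree $t$ in $z_1,\dots,z_n$, viewed inside the Hardy space $H^2(\mathbb{T}^n)$; $\mathcal{Q}_m$ is thus the space of polynomials of degree at most $m$. $T_\varphi f=\varphi f$, $P_{\mathcal{Q}_m}$ the orthogonal projection onto $\mathcal{Q}_m$, $\mathcal{S}(\mathbb{D}^n)$ the closed unit ball of $H^\infty(\mathbb{D}^n)$ with sup norm. *)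

theory Defs
  imports "HOL-Analysis.Analysis"
begin

(* Functions in H^2(T^n) are identified with their Taylor/Fourier coefficient
   families indexed by multi-indices alpha in N^n, encoded as alpha :: nat => nat
   with alpha i = 0 for i >= n. *)

definition multi_idx :: "nat \<Rightarrow> (nat \<Rightarrow> nat) set" where
  "multi_idx n = {\<alpha>. \<forall>i\<ge>n. \<alpha> i = 0}"

definition mdeg :: "nat \<Rightarrow> (nat \<Rightarrow> nat) \<Rightarrow> nat" where
  "mdeg n \<alpha> = (\<Sum>i<n. \<alpha> i)"

definition H2 :: "nat \<Rightarrow> ((nat \<Rightarrow> nat) \<Rightarrow> complex) set" where
  "H2 n = {c. (\<forall>\<alpha>. \<alpha> \<notin> multi_idx n \<longrightarrow> c \<alpha> = 0) \<and>
              (\<lambda>\<alpha>. (norm (c \<alpha>))\<^sup>2) summable_on multi_idx n}"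

definition h2_inner :: "nat \<Rightarrow> ((nat \<Rightarrow> nat) \<Rightarrow> complex) \<Rightarrow> ((nat \<Rightarrow> nat) \<Rightarrow> complex) \<Rightarrow> complex" where
  "h2_inner n f g = infsum (\<lambda>\<alpha>. f \<alpha> * cnj (g \<alpha>)) (multi_idx n)"

definition h2_norm :: "nat \<Rightarrow> ((nat \<Rightarrow> nat) \<Rightarrow> complex) \<Rightarrow> real" where
  "h2_norm n f = sqrt (infsum (\<lambda>\<alpha>. (norm (f \<alpha>))\<^sup>2) (multi_idx n))"

definition Qm :: "nat \<Rightarrow> nat \<Rightarrow> ((nat \<Rightarrow> nat) \<Rightarrow> complex) set" where
  "Qm n m = {c \<in> H2 n. \<forall>\<alpha>. mdeg n \<alpha> > m \<longrightarrow> c \<alpha> = 0}"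

definition Qm_perp :: "nat \<Rightarrow> nat \<Rightarrow> ((nat \<Rightarrow> nat) \<Rightarrow> complex) set" where
  "Qm_perp n m = {f \<in> H2 n. \<forall>q \<in> Qm n m. h2_inner n f q = 0}"

definition proj_Qm :: "nat \<Rightarrow> nat \<Rightarrow> ((nat \<Rightarrow> nat) \<Rightarrow> complex) \<Rightarrow> ((nat \<Rightarrow> nat) \<Rightarrow> complex)" where
  "proj_Qm n m f = (\<lambda>\<alpha>. if \<alpha> \<in> multi_idx n \<and> mdeg n \<alpha> \<le> m then f \<alpha> else 0)"

text \<open>Multiplication operator T_phi f = phi f (Cauchy product of coefficients);
  used only for f a polynomial, where all sums are finite.\<close>
definition mult_op :: "nat \<Rightarrow> ((nat \<Rightarrow> nat) \<Rightarrow> complex) \<Rightarrow> ((nat \<Rightarrow> nat) \<Rightarrow> complex) \<Rightarrow> ((nat \<Rightarrow> nat) \<Rightarrow> complex)" where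
  "mult_op n \<phi> f = (\<lambda>\<alpha>. if \<alpha> \<in> multi_idx n then
      (\<Sum>\<beta>\<in>{\<beta>. \<forall>i. \<beta> i \<le> \<alpha> i}. \<phi> \<beta> * f (\<lambda>i. \<alpha> i - \<beta> i)) else 0)"

definition compr :: "nat \<Rightarrow> nat \<Rightarrow> ((nat \<Rightarrow> nat) \<Rightarrow> complex) \<Rightarrow> ((nat \<Rightarrow> nat) \<Rightarrow> complex) \<Rightarrow> ((nat \<Rightarrow> nat) \<Rightarrow> complex)" where
  "compr n m \<phi> f = proj_Qm n m (mult_op n \<phi> f)"

definition monom :: "nat \<Rightarrow> (nat \<Rightarrow> complex) \<Rightarrow> (nat \<Rightarrow> nat) \<Rightarrow> complex" where
  "monom n z \<alpha> = (\<Prod>i<n. z i ^ \<alpha> i)"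

definition polydisc :: "nat \<Rightarrow> (nat \<Rightarrow> complex) set" where
  "polydisc n = {z. \<forall>i<n. norm (z i) < 1}"

text \<open>Schur class S(D^n): holomorphic functions on D^n with sup norm <= 1,
  identified with their (absolutely convergent on D^n) Taylor coefficients.\<close>
definition schur :: "nat \<Rightarrow> ((nat \<Rightarrow> nat) \<Rightarrow> complex) \<Rightarrow> bool" where
  "schur n c \<longleftrightarrow> (\<forall>\<alpha>. \<alpha> \<notin> multi_idx n \<longrightarrow> c \<alpha> = 0) \<and>
     (\<forall>z \<in> polydisc n. (\<lambda>\<alpha>. c \<alpha> * monom n z \<alpha>) summable_on multi_idx n \<and>
        norm (infsum (\<lambda>\<alpha>. c \<alpha> * monom n z \<alpha>) (multi_idx n)) \<le> 1)"

end

theory Submission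
  imports Defs "HOL-Library.Function_Algebras"
begin

(* The heart of the matter is that T_phi is a contraction on polynomials whenever phi is a Schur
   function. For r < 1 the Taylor series of phi(r z) converges absolutely on the closed polydisc,
   so a large enough truncation P of it is a polynomial with |P| <= 1 + eps on the torus whose
   products with a given polynomial g have the same relevant coefficients as phi(r z) g. For
   polynomials the l2 norm of the coefficients is the mean of |.|^2 over a fine grid of roots of
   unity (discrete Parseval), which gives ||P g|| <= (1 + eps) ||g||; then let eps -> 0, r -> 1.
   Given this, if p + f is Schur with f orthogonal to Q_m, then p + f has the same coefficients of
   degree <= m as p, so it lifts S_p, and S_p is a contraction. Conversely, applying a lift phi to
   the constant 1 shows that phi agrees with p in degrees <= m, so f = phi - p lies in Q_m-perp. *)

lemma add_diff_inverse_fun: "\<beta> \<le> (\<alpha> :: nat \<Rightarrow> nat) \<Longrightarrow> \<beta> + (\<alpha> - \<beta>) = \<alpha>"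
  by (simp add: fun_eq_iff le_fun_def)

lemma mdeg_add: "mdeg n (\<alpha> + \<beta>) = mdeg n \<alpha> + mdeg n \<beta>"
  unfolding mdeg_def by (simp add: sum.distrib)

lemma mdeg_mono: "\<beta> \<le> \<alpha> \<Longrightarrow> mdeg n \<beta> \<le> mdeg n \<alpha>"
  unfolding mdeg_def le_fun_def by (simp add: sum_mono)

lemma coord_le_mdeg: "i < n \<Longrightarrow> \<alpha> i \<le> mdeg n \<alpha>"
  unfolding mdeg_def by (intro member_le_sum) simp_all

lemma multi_idx_le:
  assumes "\<alpha> \<in> multi_idx n" "\<beta> \<le> \<alpha>" shows "\<beta> \<in> multi_idx n"
proof -
  have "\<beta> i = 0" if "i \<ge> n" for i
  proof -
    have "\<beta> i \<le> \<alpha> i" using assms(2) by (simp add: le_fun_def)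
    moreover have "\<alpha> i = 0" using assms(1) that by (simp add: multi_idx_def)
    ultimately show ?thesis by simp
  qed
  then show ?thesis unfolding multi_idx_def by simp
qed

lemma multi_idx_add: "\<alpha> \<in> multi_idx n \<Longrightarrow> \<beta> \<in> multi_idx n \<Longrightarrow> \<alpha> + \<beta> \<in> multi_idx n"
  unfolding multi_idx_def by simp

lemma zero_multi_idx [simp]: "0 \<in> multi_idx n"
  unfolding multi_idx_def by simp

definition deg_le_idx :: "nat \<Rightarrow> nat \<Rightarrow> (nat \<Rightarrow> nat) set" where
  "deg_le_idx n m = {\<alpha> \<in> multi_idx n. mdeg n \<alpha> \<le> m}"

lemma finite_deg_le_idx: "finite (deg_le_idx n m)"
proof (rule finite_subset)
  have "\<alpha> i \<le> m" if "\<alpha> \<in> deg_le_idx n m" "i < n" for \<alpha> i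
    using coord_le_mdeg[OF that(2), of \<alpha>] that(1) by (simp add: deg_le_idx_def)
  then show "deg_le_idx n m \<subseteq> {f. \<forall>i. (i \<in> {..<n} \<longrightarrow> f i \<in> {..m}) \<and> (i \<notin> {..<n} \<longrightarrow> f i = 0)}"
    by (auto simp: deg_le_idx_def multi_idx_def)
qed (rule finite_set_of_finite_funs; simp)

lemma deg_le_idx_le: "\<alpha> \<in> deg_le_idx n m \<Longrightarrow> \<beta> \<le> \<alpha> \<Longrightarrow> \<beta> \<in> deg_le_idx n m"
  unfolding deg_le_idx_def using multi_idx_le mdeg_mono le_trans by blast

lemma finite_atMost_multi_idx: "\<alpha> \<in> multi_idx n \<Longrightarrow> finite {..\<alpha>}"
  using deg_le_idx_le[of \<alpha> n "mdeg n \<alpha>"]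
  by (intro finite_subset[OF _ finite_deg_le_idx]) (auto simp: deg_le_idx_def)

lemma multi_idx_bounded:
  fixes S :: "(nat \<Rightarrow> nat) set"
  assumes "finite S"
  obtains N where "N > 0" "\<And>\<alpha> i. \<alpha> \<in> S \<Longrightarrow> i < n \<Longrightarrow> \<alpha> i < N"
proof
  show "Suc (\<Sum>\<alpha>\<in>S. mdeg n \<alpha>) > 0" by simp
  fix \<alpha> i assume "\<alpha> \<in> S" "i < n"
  then have "\<alpha> i \<le> (\<Sum>\<alpha>\<in>S. mdeg n \<alpha>)"
    using coord_le_mdeg member_le_sum[OF _ _ assms] le_trans by (metis zero_le)
  then show "\<alpha> i < Suc (\<Sum>\<alpha>\<in>S. mdeg n \<alpha>)" by simp
qed

lemma mult_op_eq_sum_atMost: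
  "\<alpha> \<in> multi_idx n \<Longrightarrow> mult_op n \<phi> g \<alpha> = (\<Sum>\<beta>\<in>{..\<alpha>}. \<phi> \<beta> * g (\<alpha> - \<beta>))"
  unfolding mult_op_def atMost_def le_fun_def fun_diff_def by simp

lemma mult_op_outside: "\<alpha> \<notin> multi_idx n \<Longrightarrow> mult_op n \<phi> g \<alpha> = 0"
  by (simp add: mult_op_def)

lemma mult_op_cong:
  assumes "\<And>\<beta>. \<beta> \<le> \<alpha> \<Longrightarrow> \<phi> \<beta> = \<psi> \<beta>"
  shows "mult_op n \<phi> g \<alpha> = mult_op n \<psi> g \<alpha>"
  using assms by (cases "\<alpha> \<in> multi_idx n") (simp_all add: mult_op_eq_sum_atMost mult_op_outside)

lemma mult_op_finite_support:
  assumes "\<alpha> \<in> multi_idx n" "finite A" "finite B"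
    and "\<And>\<beta>. \<beta> \<notin> A \<Longrightarrow> a \<beta> = 0" "\<And>\<gamma>. \<gamma> \<notin> B \<Longrightarrow> g \<gamma> = 0"
  shows "mult_op n a g \<alpha> = (\<Sum>\<beta>\<in>A. \<Sum>\<gamma>\<in>B. if \<beta> + \<gamma> = \<alpha> then a \<beta> * g \<gamma> else 0)"
proof -
  have "(\<Sum>\<gamma>\<in>B. if \<beta> + \<gamma> = \<alpha> then a \<beta> * g \<gamma> else 0) = (if \<beta> \<le> \<alpha> then a \<beta> * g (\<alpha> - \<beta>) else 0)"
    for \<beta>
  proof -
    have "\<beta> + \<gamma> = \<alpha> \<longleftrightarrow> \<beta> \<le> \<alpha> \<and> \<gamma> = \<alpha> - \<beta>" for \<gamma>
    proof
      assume sum: "\<beta> + \<gamma> = \<alpha>"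
      show "\<beta> \<le> \<alpha> \<and> \<gamma> = \<alpha> - \<beta>" unfolding sum[symmetric] by (simp add: le_fun_def fun_eq_iff)
    qed (use add_diff_inverse_fun in blast)
    then show ?thesis using assms(3,5) by (simp add: sum.delta' cong: if_cong)
  qed
  then have "(\<Sum>\<beta>\<in>A. \<Sum>\<gamma>\<in>B. if \<beta> + \<gamma> = \<alpha> then a \<beta> * g \<gamma> else 0)
      = (\<Sum>\<beta>\<in>A \<inter> {..\<alpha>}. a \<beta> * g (\<alpha> - \<beta>))"
    using assms(2) by (simp add: sum.inter_restrict atMost_def)
  also have "\<dots> = (\<Sum>\<beta>\<in>{..\<alpha>}. a \<beta> * g (\<alpha> - \<beta>))"
    using assms(4) finite_atMost_multi_idx[OF assms(1)] by (intro sum.mono_neutral_left) auto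
  finally show ?thesis using assms(1) by (simp add: mult_op_eq_sum_atMost)
qed

lemma mult_op_dilate:
  "mult_op n (\<lambda>\<beta>. \<phi> \<beta> * c ^ mdeg n \<beta>) (\<lambda>\<gamma>. g \<gamma> * c ^ mdeg n \<gamma>) \<alpha> = c ^ mdeg n \<alpha> * mult_op n \<phi> g \<alpha>"
proof (cases "\<alpha> \<in> multi_idx n")
  case True
  have "mdeg n \<alpha> = mdeg n \<beta> + mdeg n (\<alpha> - \<beta>)" if "\<beta> \<le> \<alpha>" for \<beta>
    using mdeg_add add_diff_inverse_fun[OF that] by metis
  then show ?thesis
    using True by (simp add: mult_op_eq_sum_atMost sum_distrib_left power_add mult_ac)
qed (simp add: mult_op_outside)

lemma monom_add: "monom n z (\<alpha> + \<beta>) = monom n z \<alpha> * monom n z \<beta>"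
  unfolding monom_def by (simp add: power_add prod.distrib)

lemma monom_scale: "monom n (\<lambda>i. c * z i) \<alpha> = c ^ mdeg n \<alpha> * monom n z \<alpha>"
  unfolding monom_def mdeg_def by (simp add: power_mult_distrib prod.distrib power_sum)

lemma norm_monom_torus: "(\<And>i. i < n \<Longrightarrow> norm (z i) = 1) \<Longrightarrow> norm (monom n z \<alpha>) = 1"
  unfolding monom_def by (simp add: prod_norm[symmetric] norm_power)

lemma sum_mult_op_monom:
  assumes "finite A" "A \<subseteq> multi_idx n" "\<And>\<beta>. \<beta> \<notin> A \<Longrightarrow> a \<beta> = 0"
    and "finite B" "B \<subseteq> multi_idx n" "\<And>\<gamma>. \<gamma> \<notin> B \<Longrightarrow> g \<gamma> = 0"
  shows "(\<Sum>\<alpha>\<in>(\<lambda>(\<beta>, \<gamma>). \<beta> + \<gamma>) ` (A \<times> B). mult_op n a g \<alpha> * monom n z \<alpha>)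
       = (\<Sum>\<beta>\<in>A. a \<beta> * monom n z \<beta>) * (\<Sum>\<gamma>\<in>B. g \<gamma> * monom n z \<gamma>)"
    (is "(\<Sum>\<alpha>\<in>?S. _) = _")
proof -
  have S: "finite ?S" "?S \<subseteq> multi_idx n" using assms(1,2,4,5) by (auto intro!: multi_idx_add)
  have "(\<Sum>\<alpha>\<in>?S. mult_op n a g \<alpha> * monom n z \<alpha>)
      = (\<Sum>\<alpha>\<in>?S. \<Sum>\<beta>\<in>A. \<Sum>\<gamma>\<in>B. if \<beta> + \<gamma> = \<alpha> then a \<beta> * g \<gamma> * monom n z \<alpha> else 0)"
  proof (rule sum.cong[OF refl])
    fix \<alpha> assume "\<alpha> \<in> ?S"
    then have "mult_op n a g \<alpha> = (\<Sum>\<beta>\<in>A. \<Sum>\<gamma>\<in>B. if \<beta> + \<gamma> = \<alpha> then a \<beta> * g \<gamma> else 0)"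
      using S(2) assms by (intro mult_op_finite_support) auto
    then show "mult_op n a g \<alpha> * monom n z \<alpha>
        = (\<Sum>\<beta>\<in>A. \<Sum>\<gamma>\<in>B. if \<beta> + \<gamma> = \<alpha> then a \<beta> * g \<gamma> * monom n z \<alpha> else 0)"
      by (auto simp: sum_distrib_right intro!: sum.cong)
  qed
  also have "\<dots> = (\<Sum>\<beta>\<in>A. \<Sum>\<gamma>\<in>B. \<Sum>\<alpha>\<in>?S. if \<beta> + \<gamma> = \<alpha> then a \<beta> * g \<gamma> * monom n z \<alpha> else 0)"
    by (subst sum.swap) (simp only: sum.swap[of _ ?S])
  also have "\<dots> = (\<Sum>\<beta>\<in>A. \<Sum>\<gamma>\<in>B. a \<beta> * g \<gamma> * monom n z (\<beta> + \<gamma>))"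
    using S(1) by (intro sum.cong refl) (auto simp: sum.delta)
  also have "\<dots> = (\<Sum>\<beta>\<in>A. a \<beta> * monom n z \<beta>) * (\<Sum>\<gamma>\<in>B. g \<gamma> * monom n z \<gamma>)"
    by (simp add: sum_product monom_add mult_ac)
  finally show ?thesis .
qed

definition unit_root :: "nat \<Rightarrow> complex" where
  "unit_root N = exp (2 * of_real pi * \<i> / of_nat N)"

lemma unit_root_power: "unit_root N ^ j = exp (2 * of_real pi * \<i> * of_nat j / of_nat N)"
  unfolding unit_root_def exp_of_nat_mult[symmetric] by (simp add: mult_ac)

lemma norm_unit_root_power [simp]: "norm (unit_root N ^ j) = 1"
  unfolding unit_root_power by (simp add: norm_exp_eq_Re)

lemma unit_root_power_eq_iff: "a < N \<Longrightarrow> b < N \<Longrightarrow> unit_root N ^ a = unit_root N ^ b \<longleftrightarrow> a = b"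
  unfolding unit_root_power using complex_root_unity_eq[of N a b] by simp

lemma unit_root_power_N: "0 < N \<Longrightarrow> unit_root N ^ N = 1"
  using complex_root_unity[of N 1] by (simp add: unit_root_def)

lemma unit_root_power_mult_cnj: "unit_root N ^ j * cnj (unit_root N ^ j) = 1"
  using complex_norm_square[of "unit_root N ^ j"] by simp

lemma sum_unit_root_powers_orthogonal:
  assumes "a < N" "b < N"
  shows "(\<Sum>j<N. (unit_root N ^ j) ^ a * cnj ((unit_root N ^ j) ^ b)) = (if a = b then of_nat N else 0)"
proof -
  define x where "x = unit_root N ^ a * cnj (unit_root N ^ b)"
  have "(unit_root N ^ j) ^ a * cnj ((unit_root N ^ j) ^ b) = x ^ j" for j
    unfolding x_def power_mult_distrib complex_cnj_power
    by (simp only: power_mult[symmetric] mult.commute)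
  moreover have "x ^ N = 1"
  proof -
    have "x ^ N = (unit_root N ^ N) ^ a * cnj ((unit_root N ^ N) ^ b)"
      unfolding x_def power_mult_distrib complex_cnj_power
      by (simp only: power_mult[symmetric] mult.commute)
    then show ?thesis using assms by (simp add: unit_root_power_N)
  qed
  moreover have "x = 1 \<longleftrightarrow> a = b"
  proof
    assume "x = 1"
    have "x * unit_root N ^ b = unit_root N ^ a * (unit_root N ^ b * cnj (unit_root N ^ b))"
      unfolding x_def by (simp only: mult_ac)
    then have "unit_root N ^ b = unit_root N ^ a"
      using \<open>x = 1\<close> by (simp only: unit_root_power_mult_cnj mult_1_right mult_1_left)
    then show "a = b" using unit_root_power_eq_iff[OF assms] by simp
  next
    assume "a = b"
    then show "x = 1" unfolding x_def by (simp only: unit_root_power_mult_cnj)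
  qed
  ultimately show ?thesis by (simp add: sum_gp_strict)
qed

definition torus_grid :: "nat \<Rightarrow> (nat \<Rightarrow> nat) \<Rightarrow> nat \<Rightarrow> complex" where
  "torus_grid N k i = unit_root N ^ k i"

lemma norm_torus_grid [simp]: "norm (torus_grid N k i) = 1"
  by (simp add: torus_grid_def)

lemma monom_torus_grid_orthogonal:
  assumes "\<alpha> \<in> multi_idx n" "\<beta> \<in> multi_idx n" "\<And>i. i < n \<Longrightarrow> \<alpha> i < N" "\<And>i. i < n \<Longrightarrow> \<beta> i < N"
  shows "(\<Sum>k\<in>PiE {..<n} (\<lambda>_. {..<N}). monom n (torus_grid N k) \<alpha> * cnj (monom n (torus_grid N k) \<beta>))
       = (if \<alpha> = \<beta> then of_nat N ^ n else 0)"
proof -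
  have "(\<Sum>k\<in>PiE {..<n} (\<lambda>_. {..<N}). monom n (torus_grid N k) \<alpha> * cnj (monom n (torus_grid N k) \<beta>))
      = (\<Sum>k\<in>PiE {..<n} (\<lambda>_. {..<N}). \<Prod>i<n. (unit_root N ^ k i) ^ \<alpha> i * cnj ((unit_root N ^ k i) ^ \<beta> i))"
    by (simp add: monom_def torus_grid_def cnj_prod prod.distrib)
  also have "\<dots> = (\<Prod>i<n. \<Sum>j<N. (unit_root N ^ j) ^ \<alpha> i * cnj ((unit_root N ^ j) ^ \<beta> i))"
    by (rule prod_sum_PiE[symmetric]) auto
  also have "\<dots> = (\<Prod>i<n. if \<alpha> i = \<beta> i then of_nat N else 0)"
    using assms(3,4) by (intro prod.cong refl sum_unit_root_powers_orthogonal) auto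
  also have "\<dots> = (if \<alpha> = \<beta> then of_nat N ^ n else 0)"
  proof (cases "\<alpha> = \<beta>")
    case False
    then obtain i where "\<alpha> i \<noteq> \<beta> i" by auto
    moreover from this have "i < n" using assms(1,2) unfolding multi_idx_def by (cases "i < n") auto
    ultimately show ?thesis using False by (auto intro: prod_zero)
  qed simp
  finally show ?thesis .
qed

lemma parseval_torus_grid:
  assumes "finite S" "S \<subseteq> multi_idx n" "\<And>\<alpha> i. \<alpha> \<in> S \<Longrightarrow> i < n \<Longrightarrow> \<alpha> i < N"
  shows "(\<Sum>k\<in>PiE {..<n} (\<lambda>_. {..<N}). (norm (\<Sum>\<alpha>\<in>S. c \<alpha> * monom n (torus_grid N k) \<alpha>))\<^sup>2)
       = real N ^ n * (\<Sum>\<alpha>\<in>S. (norm (c \<alpha>))\<^sup>2)"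
proof -
  let ?K = "PiE {..<n} (\<lambda>_. {..<N})"
  let ?e = "\<lambda>k \<alpha>. monom n (torus_grid N k) \<alpha>"
  have "complex_of_real (\<Sum>k\<in>?K. (norm (\<Sum>\<alpha>\<in>S. c \<alpha> * ?e k \<alpha>))\<^sup>2)
      = (\<Sum>k\<in>?K. \<Sum>\<alpha>\<in>S. \<Sum>\<beta>\<in>S. c \<alpha> * cnj (c \<beta>) * (?e k \<alpha> * cnj (?e k \<beta>)))"
    unfolding of_real_sum complex_norm_square by (simp add: cnj_sum sum_product mult_ac)
  also have "\<dots> = (\<Sum>\<alpha>\<in>S. \<Sum>\<beta>\<in>S. c \<alpha> * cnj (c \<beta>) * (\<Sum>k\<in>?K. ?e k \<alpha> * cnj (?e k \<beta>)))"
    by (subst sum.swap) (simp add: sum.swap[of _ ?K] sum_distrib_left)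
  also have "\<dots> = (\<Sum>\<alpha>\<in>S. \<Sum>\<beta>\<in>S. c \<alpha> * cnj (c \<beta>) * (if \<alpha> = \<beta> then of_nat N ^ n else 0))"
    using assms(2,3) by (intro sum.cong refl) (simp add: monom_torus_grid_orthogonal subset_iff)
  also have "\<dots> = of_nat N ^ n * (\<Sum>\<alpha>\<in>S. c \<alpha> * cnj (c \<alpha>))"
    using assms(1) by (simp add: sum_distrib_left mult_ac if_distrib cong: if_cong)
  also have "\<dots> = complex_of_real (real N ^ n * (\<Sum>\<alpha>\<in>S. (norm (c \<alpha>))\<^sup>2))"
    unfolding of_real_mult of_real_sum complex_norm_square by simp
  finally show ?thesis by (simp only: of_real_eq_iff)
qed

lemma sum_sq_mult_op_le_torus_bound:
  assumes A: "finite A" "A \<subseteq> multi_idx n" "\<And>\<beta>. \<beta> \<notin> A \<Longrightarrow> a \<beta> = 0"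
    and B: "finite B" "B \<subseteq> multi_idx n" "\<And>\<gamma>. \<gamma> \<notin> B \<Longrightarrow> g \<gamma> = 0"
    and bound: "\<And>\<zeta>. (\<And>i. i < n \<Longrightarrow> norm (\<zeta> i) = 1) \<Longrightarrow> norm (\<Sum>\<beta>\<in>A. a \<beta> * monom n \<zeta> \<beta>) \<le> M"
  shows "(\<Sum>\<alpha>\<in>F. (norm (mult_op n a g \<alpha>))\<^sup>2) \<le> M\<^sup>2 * (\<Sum>\<gamma>\<in>B. (norm (g \<gamma>))\<^sup>2)"
proof -
  define S where "S = (\<lambda>(\<beta>, \<gamma>). \<beta> + \<gamma>) ` (A \<times> B)"
  have S: "finite S" "S \<subseteq> multi_idx n"
    unfolding S_def using A(1,2) B(1,2) by (auto intro!: multi_idx_add)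
  have outside_S: "mult_op n a g \<alpha> = 0" if "\<alpha> \<notin> S" for \<alpha>
  proof (cases "\<alpha> \<in> multi_idx n")
    case True
    have "\<beta> + \<gamma> \<noteq> \<alpha>" if "\<beta> \<in> A" "\<gamma> \<in> B" for \<beta> \<gamma>
      using that \<open>\<alpha> \<notin> S\<close> unfolding S_def by auto
    then show ?thesis using True A B by (simp add: mult_op_finite_support)
  qed (simp add: mult_op_outside)
  have F_le_S: "(\<Sum>\<alpha>\<in>F. (norm (mult_op n a g \<alpha>))\<^sup>2) \<le> (\<Sum>\<alpha>\<in>S. (norm (mult_op n a g \<alpha>))\<^sup>2)"
  proof (cases "finite F")
    case True
    have "(\<Sum>\<alpha>\<in>F. (norm (mult_op n a g \<alpha>))\<^sup>2) = (\<Sum>\<alpha>\<in>F \<inter> S. (norm (mult_op n a g \<alpha>))\<^sup>2)"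
      using True outside_S by (intro sum.mono_neutral_right) auto
    also have "\<dots> \<le> (\<Sum>\<alpha>\<in>S. (norm (mult_op n a g \<alpha>))\<^sup>2)"
      using S(1) by (intro sum_mono2) auto
    finally show ?thesis .
  qed (simp add: sum_nonneg)
  obtain N where N: "N > 0" "\<And>\<alpha> i. \<alpha> \<in> S \<union> B \<Longrightarrow> i < n \<Longrightarrow> \<alpha> i < N"
    using multi_idx_bounded[of "S \<union> B" n] S(1) B(1) by blast
  let ?K = "PiE {..<n} (\<lambda>_. {..<N})"
  let ?ev = "\<lambda>c X k. \<Sum>\<alpha>\<in>X. c \<alpha> * monom n (torus_grid N k) \<alpha>"
  have "real N ^ n * (\<Sum>\<alpha>\<in>S. (norm (mult_op n a g \<alpha>))\<^sup>2) = (\<Sum>k\<in>?K. (norm (?ev (mult_op n a g) S k))\<^sup>2)"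
    using S N(2) by (intro parseval_torus_grid[symmetric]) auto
  also have "\<dots> = (\<Sum>k\<in>?K. (norm (?ev a A k))\<^sup>2 * (norm (?ev g B k))\<^sup>2)"
    by (simp add: S_def sum_mult_op_monom[OF A B] norm_mult power_mult_distrib)
  also have "\<dots> \<le> (\<Sum>k\<in>?K. M\<^sup>2 * (norm (?ev g B k))\<^sup>2)"
    using bound by (intro sum_mono mult_right_mono power_mono) auto
  also have "\<dots> = real N ^ n * (M\<^sup>2 * (\<Sum>\<gamma>\<in>B. (norm (g \<gamma>))\<^sup>2))"
    using B(1,2) N(2) by (simp add: sum_distrib_left[symmetric] parseval_torus_grid mult_ac)
  finally show ?thesis using F_le_S N(1) by (simp add: mult_le_cancel_left_pos)
qed

lemma nonneg_summable_tail_le: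
  fixes w :: "'a \<Rightarrow> real"
  assumes "w summable_on I" "\<And>x. x \<in> I \<Longrightarrow> 0 \<le> w x" "\<epsilon> > 0"
  obtains T0 where "finite T0" "T0 \<subseteq> I"
    "\<And>T. finite T \<Longrightarrow> T0 \<subseteq> T \<Longrightarrow> T \<subseteq> I \<Longrightarrow> infsum w (I - T) \<le> \<epsilon>"
proof -
  obtain T0 where T0: "finite T0" "T0 \<subseteq> I" "dist (sum w T0) (infsum w I) \<le> \<epsilon>"
    using infsum_finite_approximation[OF assms(1,3)] by blast
  have "infsum w (I - T) \<le> \<epsilon>" if "finite T" "T0 \<subseteq> T" "T \<subseteq> I" for T
  proof -
    have "infsum w (I - T) = infsum w I - sum w T"
      using infsum_Diff[OF assms(1) _ that(3)] that(1) by simp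
    also have "\<dots> \<le> infsum w I - sum w T0"
      using that assms(2) by (intro diff_left_mono sum_mono2) auto
    finally show ?thesis using T0(3) by (simp add: dist_real_def)
  qed
  then show ?thesis using T0(1,2) that by blast
qed

lemma schur_dilation_summable:
  assumes "schur n \<phi>" "0 \<le> r" "r < 1"
  shows "(\<lambda>\<beta>. norm (\<phi> \<beta>) * r ^ mdeg n \<beta>) summable_on multi_idx n"
proof -
  have "(\<lambda>i. complex_of_real r) \<in> polydisc n" using assms(2,3) by (simp add: polydisc_def)
  then have "(\<lambda>\<beta>. \<phi> \<beta> * monom n (\<lambda>i. of_real r) \<beta>) summable_on multi_idx n"
    using assms(1) by (simp add: schur_def)
  then have "(\<lambda>\<beta>. norm (\<phi> \<beta> * monom n (\<lambda>i. of_real r) \<beta>)) summable_on multi_idx n"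
    by (rule summable_on_iff_abs_summable_on_complex[THEN iffD1])
  moreover have "norm (monom n (\<lambda>i. complex_of_real r) \<beta>) = r ^ mdeg n \<beta>" for \<beta>
    using assms(2) by (simp add: monom_def mdeg_def power_sum prod_norm[symmetric] norm_power)
  ultimately show ?thesis by (simp add: norm_mult)
qed

lemma schur_partial_sum_bound:
  assumes "schur n \<phi>" "0 \<le> r" "r < 1" "finite T" "T \<subseteq> multi_idx n"
    and "\<And>i. i < n \<Longrightarrow> norm (\<zeta> i) = 1"
  shows "norm (\<Sum>\<beta>\<in>T. \<phi> \<beta> * of_real r ^ mdeg n \<beta> * monom n \<zeta> \<beta>)
       \<le> 1 + infsum (\<lambda>\<beta>. norm (\<phi> \<beta>) * r ^ mdeg n \<beta>) (multi_idx n - T)"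
proof -
  let ?I = "multi_idx n"
  define c where "c \<beta> = \<phi> \<beta> * monom n (\<lambda>i. of_real r * \<zeta> i) \<beta>" for \<beta>
  have c_eq: "c \<beta> = \<phi> \<beta> * of_real r ^ mdeg n \<beta> * monom n \<zeta> \<beta>" for \<beta>
    unfolding c_def monom_scale by (simp add: mult_ac)
  have "(\<lambda>i. of_real r * \<zeta> i) \<in> polydisc n"
    using assms(2,3,6) by (simp add: polydisc_def norm_mult)
  then have c_sum: "c summable_on ?I" and c_le: "norm (infsum c ?I) \<le> 1"
    using assms(1) unfolding schur_def c_def by auto
  have "sum c T = infsum c ?I - infsum c (?I - T)"
    using infsum_Diff[OF c_sum _ assms(5)] assms(4) by simp
  then have "norm (sum c T) \<le> norm (infsum c ?I) + norm (infsum c (?I - T))"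
    by (simp add: norm_triangle_ineq4)
  moreover have "norm (infsum c (?I - T)) \<le> infsum (\<lambda>\<beta>. norm (\<phi> \<beta>) * r ^ mdeg n \<beta>) (?I - T)"
  proof -
    have "(\<lambda>\<beta>. norm (c \<beta>)) summable_on (?I - T)"
      using summable_on_subset_banach[OF c_sum, of "?I - T"]
      by (intro summable_on_iff_abs_summable_on_complex[THEN iffD1]) auto
    then have "norm (infsum c (?I - T)) \<le> infsum (\<lambda>\<beta>. norm (c \<beta>)) (?I - T)"
      by (rule norm_infsum_bound)
    also have "(\<lambda>\<beta>. norm (c \<beta>)) = (\<lambda>\<beta>. norm (\<phi> \<beta>) * r ^ mdeg n \<beta>)"
      using assms(2,6) by (simp add: c_eq norm_mult norm_power norm_monom_torus)
    finally show ?thesis .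
  qed
  ultimately show ?thesis using c_le by (simp add: c_eq)
qed

lemma schur_mult_op_dilated_bound:
  assumes schur: "schur n \<phi>" and r: "0 \<le> r" "r < 1"
    and G: "finite G" "G \<subseteq> multi_idx n" "\<And>\<gamma>. \<gamma> \<notin> G \<Longrightarrow> g \<gamma> = 0"
    and F: "finite F" "F \<subseteq> multi_idx n"
  shows "(\<Sum>\<alpha>\<in>F. (norm (of_real r ^ mdeg n \<alpha> * mult_op n \<phi> g \<alpha>))\<^sup>2) \<le> (\<Sum>\<gamma>\<in>G. (norm (g \<gamma>))\<^sup>2)"
    (is "?lhs \<le> ?rhs")
proof -
  let ?I = "multi_idx n"
  define w where "w \<beta> = norm (\<phi> \<beta>) * r ^ mdeg n \<beta>" for \<beta>
  define D where "D = (\<Union>\<alpha>\<in>F. {..\<alpha>})"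
  have D: "finite D" "D \<subseteq> ?I"
    using F finite_atMost_multi_idx multi_idx_le by (auto simp: D_def)
  have "?lhs \<le> (1 + \<epsilon>)\<^sup>2 * ?rhs" if "\<epsilon> > 0" for \<epsilon>
  proof -
    obtain T0 where T0: "finite T0" "T0 \<subseteq> ?I"
      "\<And>T. finite T \<Longrightarrow> T0 \<subseteq> T \<Longrightarrow> T \<subseteq> ?I \<Longrightarrow> infsum w (?I - T) \<le> \<epsilon>"
      using nonneg_summable_tail_le[of w ?I \<epsilon>] schur_dilation_summable[OF schur r] \<open>\<epsilon> > 0\<close> r(1)
      unfolding w_def by auto
    \<comment> \<open>Adding \<open>D\<close> makes the truncation agree with the dilation of \<open>\<phi>\<close> below every \<open>\<alpha> \<in> F\<close>.\<close>
    define T where "T = T0 \<union> D"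
    have T: "finite T" "T \<subseteq> ?I" "infsum w (?I - T) \<le> \<epsilon>"
      using T0 D by (auto simp: T_def)
    define a where "a \<beta> = (if \<beta> \<in> T then \<phi> \<beta> * of_real r ^ mdeg n \<beta> else 0)" for \<beta>
    define gr where "gr = (\<lambda>\<gamma>. g \<gamma> * of_real r ^ mdeg n \<gamma>)"
    have "mult_op n a gr \<alpha> = of_real r ^ mdeg n \<alpha> * mult_op n \<phi> g \<alpha>" if "\<alpha> \<in> F" for \<alpha>
    proof -
      have "\<beta> \<in> T" if "\<beta> \<le> \<alpha>" for \<beta> using that \<open>\<alpha> \<in> F\<close> by (auto simp: T_def D_def)
      then have "mult_op n a gr \<alpha> = mult_op n (\<lambda>\<beta>. \<phi> \<beta> * of_real r ^ mdeg n \<beta>) gr \<alpha>"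
        by (intro mult_op_cong) (simp add: a_def)
      then show ?thesis by (simp add: gr_def mult_op_dilate)
    qed
    then have "?lhs = (\<Sum>\<alpha>\<in>F. (norm (mult_op n a gr \<alpha>))\<^sup>2)" by simp
    also have "\<dots> \<le> (1 + \<epsilon>)\<^sup>2 * (\<Sum>\<gamma>\<in>G. (norm (gr \<gamma>))\<^sup>2)"
    proof (rule sum_sq_mult_op_le_torus_bound)
      fix \<zeta> :: "nat \<Rightarrow> complex" assume "\<And>i. i < n \<Longrightarrow> norm (\<zeta> i) = 1"
      then have "norm (\<Sum>\<beta>\<in>T. \<phi> \<beta> * of_real r ^ mdeg n \<beta> * monom n \<zeta> \<beta>) \<le> 1 + infsum w (?I - T)"
        using schur_partial_sum_bound[OF schur r T(1,2)] unfolding w_def by blast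
      then show "norm (\<Sum>\<beta>\<in>T. a \<beta> * monom n \<zeta> \<beta>) \<le> 1 + \<epsilon>"
        using T(3) by (simp add: a_def)
    qed (use T G in \<open>auto simp: a_def gr_def\<close>)
    also have "\<dots> \<le> (1 + \<epsilon>)\<^sup>2 * ?rhs"
      using r by (intro mult_left_mono sum_mono power_mono)
        (auto simp: gr_def norm_mult norm_power intro!: mult_left_le power_le_one)
    finally show ?thesis .
  qed
  moreover have "((\<lambda>\<epsilon>. (1 + \<epsilon>)\<^sup>2 * ?rhs) \<longlongrightarrow> (1 + 0)\<^sup>2 * ?rhs) (at_right 0)"
    by (intro tendsto_intros)
  ultimately show ?thesis
    using eventually_at_right_less[of 0]
    by (intro tendsto_lowerbound[where F = "at_right (0::real)"]) (auto elim: eventually_mono)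
qed

lemma schur_mult_op_bound:
  assumes schur: "schur n \<phi>"
    and G: "finite G" "G \<subseteq> multi_idx n" "\<And>\<gamma>. \<gamma> \<notin> G \<Longrightarrow> g \<gamma> = 0"
    and F: "finite F" "F \<subseteq> multi_idx n"
  shows "(\<Sum>\<alpha>\<in>F. (norm (mult_op n \<phi> g \<alpha>))\<^sup>2) \<le> (\<Sum>\<gamma>\<in>G. (norm (g \<gamma>))\<^sup>2)"
proof -
  define f where "f r = (\<Sum>\<alpha>\<in>F. (norm (of_real r ^ mdeg n \<alpha> * mult_op n \<phi> g \<alpha>))\<^sup>2)" for r :: real
  have "(f \<longlongrightarrow> f 1) (at_left 1)"
    unfolding f_def by (intro tendsto_intros)
  moreover have "eventually (\<lambda>r. f r \<le> (\<Sum>\<gamma>\<in>G. (norm (g \<gamma>))\<^sup>2)) (at_left 1)"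
    using eventually_at_left_real[of 0 "1::real"]
    by (rule eventually_mono) (use schur_mult_op_dilated_bound[OF schur _ _ G F] in \<open>auto simp: f_def\<close>)
  ultimately have "f 1 \<le> (\<Sum>\<gamma>\<in>G. (norm (g \<gamma>))\<^sup>2)"
    by (intro tendsto_upperbound[where F = "at_left (1::real)"]) auto
  then show ?thesis by (simp add: f_def)
qed

definition monomial_coeffs :: "(nat \<Rightarrow> nat) \<Rightarrow> (nat \<Rightarrow> nat) \<Rightarrow> complex" where
  "monomial_coeffs \<gamma> = (\<lambda>\<alpha>. if \<alpha> = \<gamma> then 1 else 0)"

lemma mult_op_monomial_coeffs_0: "\<alpha> \<in> multi_idx n \<Longrightarrow> mult_op n \<phi> (monomial_coeffs 0) \<alpha> = \<phi> \<alpha>"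
proof -
  assume \<alpha>: "\<alpha> \<in> multi_idx n"
  have "\<alpha> - \<beta> = 0 \<longleftrightarrow> \<beta> = \<alpha>" if "\<beta> \<le> \<alpha>" for \<beta>
    using that by (auto simp: fun_eq_iff le_fun_def intro: order.antisym)
  then show ?thesis
    using \<alpha> finite_atMost_multi_idx[OF \<alpha>]
    by (simp add: mult_op_eq_sum_atMost monomial_coeffs_def if_distrib cong: if_cong)
qed

lemma schur_in_H2:
  assumes "schur n \<phi>"
  shows "\<phi> \<in> H2 n"
proof -
  have "(\<Sum>\<alpha>\<in>F. (norm (\<phi> \<alpha>))\<^sup>2) \<le> 1" if "F \<subseteq> multi_idx n" "finite F" for F
  proof -
    have "(\<Sum>\<alpha>\<in>F. (norm (mult_op n \<phi> (monomial_coeffs 0) \<alpha>))\<^sup>2) \<le> (\<Sum>\<gamma>\<in>{0}. (norm (monomial_coeffs 0 \<gamma>))\<^sup>2)"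
      using that by (intro schur_mult_op_bound[OF assms]) (auto simp: monomial_coeffs_def)
    moreover have "(\<Sum>\<alpha>\<in>F. (norm (mult_op n \<phi> (monomial_coeffs 0) \<alpha>))\<^sup>2) = (\<Sum>\<alpha>\<in>F. (norm (\<phi> \<alpha>))\<^sup>2)"
      using that by (intro sum.cong) (auto simp: mult_op_monomial_coeffs_0)
    ultimately show ?thesis by (simp add: monomial_coeffs_def)
  qed
  then have "(\<lambda>\<alpha>. (norm (\<phi> \<alpha>))\<^sup>2) summable_on multi_idx n"
    by (intro nonneg_bdd_above_summable_on bdd_aboveI) auto
  then show ?thesis using assms unfolding schur_def H2_def by blast
qed

lemma h2_norm_finite_support:
  assumes "finite S" "S \<subseteq> multi_idx n" "\<And>\<alpha>. \<alpha> \<in> multi_idx n - S \<Longrightarrow> f \<alpha> = 0"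
  shows "h2_norm n f = sqrt (\<Sum>\<alpha>\<in>S. (norm (f \<alpha>))\<^sup>2)"
  unfolding h2_norm_def using assms by (subst infsumI[OF has_sum_finite_neutralI]) auto

lemma Qm_outside_deg_le_idx: "q \<in> Qm n m \<Longrightarrow> \<alpha> \<notin> deg_le_idx n m \<Longrightarrow> q \<alpha> = 0"
  by (auto simp: Qm_def H2_def deg_le_idx_def not_le)

lemma compr_eq: "compr n m \<phi> g \<alpha> = (if \<alpha> \<in> deg_le_idx n m then mult_op n \<phi> g \<alpha> else 0)"
  by (simp add: compr_def proj_Qm_def deg_le_idx_def)

lemma compr_contraction:
  assumes "schur n \<phi>" "g \<in> Qm n m"
  shows "h2_norm n (compr n m \<phi> g) \<le> h2_norm n g"
proof -
  let ?D = "deg_le_idx n m"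
  have D: "finite ?D" "?D \<subseteq> multi_idx n" by (rule finite_deg_le_idx) (auto simp: deg_le_idx_def)
  have "h2_norm n (compr n m \<phi> g) = sqrt (\<Sum>\<alpha>\<in>?D. (norm (mult_op n \<phi> g \<alpha>))\<^sup>2)"
    using D by (subst h2_norm_finite_support[OF D]) (auto simp: compr_eq)
  also have "\<dots> \<le> sqrt (\<Sum>\<alpha>\<in>?D. (norm (g \<alpha>))\<^sup>2)"
    using D Qm_outside_deg_le_idx[OF assms(2)] by (intro real_sqrt_le_mono schur_mult_op_bound[OF assms(1)]) auto
  also have "\<dots> = h2_norm n g"
    using D Qm_outside_deg_le_idx[OF assms(2)] by (intro h2_norm_finite_support[symmetric]) auto
  finally show ?thesis .
qed

lemma compr_cong:
  assumes "\<And>\<alpha>. \<alpha> \<in> deg_le_idx n m \<Longrightarrow> \<phi> \<alpha> = \<psi> \<alpha>"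
  shows "compr n m \<phi> g = compr n m \<psi> g"
proof
  fix \<alpha>
  have "mult_op n \<phi> g \<alpha> = mult_op n \<psi> g \<alpha>" if "\<alpha> \<in> deg_le_idx n m"
    using that by (intro mult_op_cong assms) (rule deg_le_idx_le)
  then show "compr n m \<phi> g \<alpha> = compr n m \<psi> g \<alpha>" by (simp add: compr_eq)
qed

lemma compr_monomial_coeffs_0: "\<alpha> \<in> deg_le_idx n m \<Longrightarrow> compr n m \<phi> (monomial_coeffs 0) \<alpha> = \<phi> \<alpha>"
  by (simp add: compr_eq deg_le_idx_def mult_op_monomial_coeffs_0)

lemma monomial_coeffs_in_Qm: "\<gamma> \<in> deg_le_idx n m \<Longrightarrow> monomial_coeffs \<gamma> \<in> Qm n m"
  unfolding Qm_def H2_def deg_le_idx_def monomial_coeffs_def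
  by (auto intro!: has_sum_imp_summable has_sum_finite_neutralI[of "{\<gamma>}"] split: if_splits)

lemma h2_inner_monomial_coeffs: "\<gamma> \<in> multi_idx n \<Longrightarrow> h2_inner n f (monomial_coeffs \<gamma>) = f \<gamma>"
  unfolding h2_inner_def monomial_coeffs_def
  by (subst infsumI[OF has_sum_finite_neutralI[of "{\<gamma>}"]]) auto

lemma Qm_perp_eq: "Qm_perp n m = {f \<in> H2 n. \<forall>\<alpha> \<in> deg_le_idx n m. f \<alpha> = 0}"
proof safe
  fix f \<alpha> assume f: "f \<in> Qm_perp n m" and \<alpha>: "\<alpha> \<in> deg_le_idx n m"
  then have "h2_inner n f (monomial_coeffs \<alpha>) = 0"
    using monomial_coeffs_in_Qm[OF \<alpha>] by (simp add: Qm_perp_def)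
  then show "f \<alpha> = 0"
    using \<alpha> by (simp add: h2_inner_monomial_coeffs deg_le_idx_def)
next
  fix f assume "f \<in> H2 n" "\<forall>\<alpha> \<in> deg_le_idx n m. f \<alpha> = 0"
  then show "f \<in> Qm_perp n m"
    unfolding Qm_perp_def h2_inner_def using Qm_outside_deg_le_idx
    by (auto intro!: infsum_0)
qed (simp add: Qm_perp_def)

lemma H2_vanish_on:
  assumes "\<phi> \<in> H2 n"
  shows "(\<lambda>\<alpha>. if \<alpha> \<in> X then 0 else \<phi> \<alpha>) \<in> H2 n"
proof -
  have "(\<lambda>\<alpha>. (norm (if \<alpha> \<in> X then 0 else \<phi> \<alpha>))\<^sup>2) summable_on multi_idx n"
    using assms unfolding H2_def by (auto intro: summable_on_comparison_test)
  then show ?thesis using assms unfolding H2_def by auto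
qed

theorem proposition10p1:
  fixes n m :: nat and p :: "(nat \<Rightarrow> nat) \<Rightarrow> complex"
  assumes "n \<ge> 1" and "p \<in> Qm n m"
  shows "(\<exists>f \<in> Qm_perp n m. schur n (\<lambda>\<alpha>. p \<alpha> + f \<alpha>)) \<longleftrightarrow>
         ((\<forall>g \<in> Qm n m. h2_norm n (compr n m p g) \<le> h2_norm n g) \<and>
          (\<exists>\<phi>. schur n \<phi> \<and> (\<forall>g \<in> Qm n m. compr n m p g = compr n m \<phi> g)))"
proof
  assume "\<exists>f \<in> Qm_perp n m. schur n (\<lambda>\<alpha>. p \<alpha> + f \<alpha>)"
  then obtain f where f: "f \<in> Qm_perp n m" and schur: "schur n (\<lambda>\<alpha>. p \<alpha> + f \<alpha>)" by blast
  have "compr n m p g = compr n m (\<lambda>\<alpha>. p \<alpha> + f \<alpha>) g" for g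
    using f by (intro compr_cong) (simp add: Qm_perp_eq)
  then show "(\<forall>g \<in> Qm n m. h2_norm n (compr n m p g) \<le> h2_norm n g) \<and>
      (\<exists>\<phi>. schur n \<phi> \<and> (\<forall>g \<in> Qm n m. compr n m p g = compr n m \<phi> g))"
    using compr_contraction[OF schur] schur by auto
next
  assume "(\<forall>g \<in> Qm n m. h2_norm n (compr n m p g) \<le> h2_norm n g) \<and>
      (\<exists>\<phi>. schur n \<phi> \<and> (\<forall>g \<in> Qm n m. compr n m p g = compr n m \<phi> g))"
  then obtain \<phi> where schur: "schur n \<phi>" and lift: "\<And>g. g \<in> Qm n m \<Longrightarrow> compr n m p g = compr n m \<phi> g"
    by blast
  have low: "\<phi> \<alpha> = p \<alpha>" if "\<alpha> \<in> deg_le_idx n m" for \<alpha>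
  proof -
    have "0 \<in> deg_le_idx n m" by (simp add: deg_le_idx_def mdeg_def)
    then have "compr n m p (monomial_coeffs 0) = compr n m \<phi> (monomial_coeffs 0)"
      by (intro lift monomial_coeffs_in_Qm)
    then show ?thesis using that by (metis compr_monomial_coeffs_0)
  qed
  define f where "f = (\<lambda>\<alpha>. if \<alpha> \<in> deg_le_idx n m then 0 else \<phi> \<alpha>)"
  have "f \<in> Qm_perp n m"
    unfolding Qm_perp_eq f_def using H2_vanish_on[OF schur_in_H2[OF schur]] by auto
  moreover have "(\<lambda>\<alpha>. p \<alpha> + f \<alpha>) = \<phi>"
    using low Qm_outside_deg_le_idx[OF assms(2)] by (auto simp: f_def)
  ultimately show "\<exists>f \<in> Qm_perp n m. schur n (\<lambda>\<alpha>. p \<alpha> + f \<alpha>)" using schur by auto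
qed

end
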